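(* For all integers $s,t \ge 3$, every doubly saturated $R(s,t)$-good graph has at least $2s+2t-7$ vertices. Equivalently, $\mathsf{DS}(s,t) \ge 2s+2t-7$, where $\mathsf{DS}(s,t) := \inf\{n \mid \text{there is a doubly saturated } R(s,t)\text{-good graph on } n \text{ vertices}\}$ (with $\inf \emptyset = \infty$).
   Context: All graphs are finite and simple. A graph $G$ is \emph{$R(s,t)$-good} if it contains no clique of size $s$ and no independent set of size $t$. A graph $G$ is \emph{doubly saturated $R(s,t)$-good} if (i) $G$ is $R(s,t)$-good; (ii) for every pair of non-adjacent distinct vertices $u,v$, the graph $G + uv$ is not $R(s,t)$-good; (iii) for every edge $uv$ of $G$, the graph $G - uv$ is not $R(s,t)$-good; and (iv) $G$ is neither a complete graph nor an edgeless graph. *)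

theory Defs
  imports Main
begin

definition simple_graph :: "'a set \<Rightarrow> ('a \<Rightarrow> 'a \<Rightarrow> bool) \<Rightarrow> bool" where
  "simple_graph V E \<longleftrightarrow> finite V \<and> (\<forall>u v. E u v \<longrightarrow> u \<in> V \<and> v \<in> V)
     \<and> (\<forall>u v. E u v \<longrightarrow> E v u) \<and> (\<forall>v. \<not> E v v)"

definition is_clique :: "'a set \<Rightarrow> ('a \<Rightarrow> 'a \<Rightarrow> bool) \<Rightarrow> 'a set \<Rightarrow> bool" where
  "is_clique V E K \<longleftrightarrow> K \<subseteq> V \<and> (\<forall>u\<in>K. \<forall>v\<in>K. u \<noteq> v \<longrightarrow> E u v)"

definition is_indep :: "'a set \<Rightarrow> ('a \<Rightarrow> 'a \<Rightarrow> bool) \<Rightarrow> 'a set \<Rightarrow> bool" where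
  "is_indep V E I \<longleftrightarrow> I \<subseteq> V \<and> (\<forall>u\<in>I. \<forall>v\<in>I. \<not> E u v)"

definition ramsey_good :: "nat \<Rightarrow> nat \<Rightarrow> 'a set \<Rightarrow> ('a \<Rightarrow> 'a \<Rightarrow> bool) \<Rightarrow> bool" where
  "ramsey_good s t V E \<longleftrightarrow>
     \<not> (\<exists>K. is_clique V E K \<and> card K = s) \<and> \<not> (\<exists>I. is_indep V E I \<and> card I = t)"

definition add_edge :: "('a \<Rightarrow> 'a \<Rightarrow> bool) \<Rightarrow> 'a \<Rightarrow> 'a \<Rightarrow> ('a \<Rightarrow> 'a \<Rightarrow> bool)" where
  "add_edge E u v = (\<lambda>x y. E x y \<or> (x = u \<and> y = v) \<or> (x = v \<and> y = u))"

definition del_edge :: "('a \<Rightarrow> 'a \<Rightarrow> bool) \<Rightarrow> 'a \<Rightarrow> 'a \<Rightarrow> ('a \<Rightarrow> 'a \<Rightarrow> bool)" where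
  "del_edge E u v = (\<lambda>x y. E x y \<and> \<not> (x = u \<and> y = v) \<and> \<not> (x = v \<and> y = u))"

definition doubly_saturated :: "nat \<Rightarrow> nat \<Rightarrow> 'a set \<Rightarrow> ('a \<Rightarrow> 'a \<Rightarrow> bool) \<Rightarrow> bool" where
  "doubly_saturated s t V E \<longleftrightarrow>
     ramsey_good s t V E
     \<and> (\<forall>u\<in>V. \<forall>v\<in>V. u \<noteq> v \<and> \<not> E u v \<longrightarrow> \<not> ramsey_good s t V (add_edge E u v))
     \<and> (\<forall>u v. E u v \<longrightarrow> \<not> ramsey_good s t V (del_edge E u v))
     \<and> \<not> (\<forall>u\<in>V. \<forall>v\<in>V. u \<noteq> v \<longrightarrow> E u v)
     \<and> \<not> (\<forall>u v. \<not> E u v)"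

end

theory Submission
  imports Defs
begin

text \<open>Fix a vertex w with both a neighbour and a non-neighbour. Inside the neighbourhood N(w)
cliques have at most s - 2 vertices, and double saturation shows that every vertex of N(w)
is avoided by some (s - 2)-clique of N(w): deleting the edge from w to it creates an
independent t-set, and adding the edge from w to a further vertex y of that set creates an
s-clique through w and y. So the maximum cliques of N(w) have empty intersection, and
Hajnal's inequality (union plus intersection of maximum cliques is at least twice the clique
number) gives |N(w)| \<ge> 2(s - 2). The complement of a doubly saturated R(s,t)-good graph is
doubly saturated R(t,s)-good, so likewise w has at least 2(t - 2) non-neighbours, and
|V| \<ge> 1 + 2(s - 2) + 2(t - 2).\<close>

lemma pairwise_Inter_Un:
  assumes "F \<noteq> {}" and "\<forall>D\<in>F. pairwise R D" and "pairwise R C" and "C \<subseteq> \<Union>F"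
  shows "pairwise R (\<Inter>F \<union> C)"
proof -
  have common_member: "\<exists>D\<in>F. x \<in> D \<and> y \<in> D" if "x \<in> \<Inter>F" "y \<in> \<Inter>F \<union> C" for x y
    using that assms(1,4) by blast
  show ?thesis
  proof (rule pairwiseI)
    fix x y assume xy: "x \<in> \<Inter>F \<union> C" "y \<in> \<Inter>F \<union> C" "x \<noteq> y"
    show "R x y"
    proof (cases "x \<in> C \<and> y \<in> C")
      case True
      then show ?thesis using assms(3) xy(3) by (simp add: pairwise_def)
    next
      case False
      then obtain D where "D \<in> F" "x \<in> D" "y \<in> D"
        using common_member[of x y] common_member[of y x] xy by blast
      then show ?thesis using assms(2) xy(3) by (simp add: pairwise_def)
    qed
  qed
qed

lemma hajnal_card_Union_Inter:
  assumes "finite S" and clique_bound: "\<And>X. X \<subseteq> S \<Longrightarrow> pairwise R X \<Longrightarrow> card X \<le> r"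
    and "finite F" and "F \<noteq> {}" and "\<forall>C\<in>F. C \<subseteq> S \<and> pairwise R C \<and> card C = r"
  shows "2 * r \<le> card (\<Union>F) + card (\<Inter>F)"
  using assms(3-5)
proof (induction F rule: finite_ne_induct)
  case (singleton C)
  then show ?case by simp
next
  case (insert C F)
  define U where "U = \<Union>F"
  define I where "I = \<Inter>F"
  have C: "C \<subseteq> S" "pairwise R C" "card C = r" using insert.prems by auto
  have IH: "2 * r \<le> card U + card I" using insert unfolding U_def I_def by simp
  have "U \<subseteq> S" using insert.prems unfolding U_def by auto
  moreover have "I \<subseteq> U" using insert.hyps(2) unfolding U_def I_def by auto
  ultimately have fin: "finite U" "finite I" "finite C"
    using C(1) \<open>finite S\<close> by (auto intro: finite_subset)
  have "pairwise R (C \<inter> U)"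
    using C(2) by (rule pairwise_subset) blast
  then have "pairwise R (I \<union> (C \<inter> U))"
    unfolding I_def U_def using insert.hyps(2) insert.prems
    by (intro pairwise_Inter_Un) auto
  then have "card (I \<union> (C \<inter> U)) \<le> r"
    using \<open>I \<subseteq> U\<close> \<open>U \<subseteq> S\<close> by (intro clique_bound) auto
  moreover have "I \<inter> (C \<inter> U) = C \<inter> I"
    using \<open>I \<subseteq> U\<close> by blast
  then have "card (I \<union> (C \<inter> U)) + card (C \<inter> I) = card I + card (C \<inter> U)"
    using card_Un_Int[of I "C \<inter> U"] fin by simp
  moreover have "card (C \<union> U) + card (C \<inter> U) = card C + card U"
    using card_Un_Int[of C U] fin by simp
  ultimately have "2 * r \<le> card (C \<union> U) + card (C \<inter> I)" using IH C(3) by linarith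
  then show ?case unfolding U_def I_def by simp
qed

lemma twice_clique_bound_le_card:
  assumes "finite S" and "S \<noteq> {}"
    and clique_bound: "\<And>X. X \<subseteq> S \<Longrightarrow> pairwise R X \<Longrightarrow> card X \<le> r"
    and avoided: "\<And>a. a \<in> S \<Longrightarrow> \<exists>K\<subseteq>S. pairwise R K \<and> card K = r \<and> a \<notin> K"
  shows "2 * r \<le> card S"
proof -
  define F where "F = {K. K \<subseteq> S \<and> pairwise R K \<and> card K = r}"
  have "finite F" unfolding F_def using \<open>finite S\<close> by simp
  moreover have "F \<noteq> {}" using avoided \<open>S \<noteq> {}\<close> unfolding F_def by blast
  ultimately have "2 * r \<le> card (\<Union>F) + card (\<Inter>F)"
    using hajnal_card_Union_Inter[OF \<open>finite S\<close> clique_bound] unfolding F_def by blast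
  moreover have "\<Inter>F = {}"
    using avoided \<open>F \<noteq> {}\<close> unfolding F_def by blast
  moreover have "card (\<Union>F) \<le> card S"
    by (rule card_mono) (auto simp: F_def \<open>finite S\<close>)
  ultimately show ?thesis by simp
qed

lemma doubly_saturatedD:
  assumes "doubly_saturated s t V E"
  shows "ramsey_good s t V E"
    and "\<And>u v. u \<in> V \<Longrightarrow> v \<in> V \<Longrightarrow> u \<noteq> v \<Longrightarrow> \<not> E u v
           \<Longrightarrow> \<not> ramsey_good s t V (add_edge E u v)"
    and "\<And>u v. E u v \<Longrightarrow> \<not> ramsey_good s t V (del_edge E u v)"
    and "\<exists>u\<in>V. \<exists>v\<in>V. u \<noteq> v \<and> \<not> E u v"
    and "\<exists>u v. E u v"
  using assms unfolding doubly_saturated_def by blast+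

lemma clique_card_less:
  assumes "ramsey_good s t V E" and "is_clique V E K"
  shows "card K < s"
proof (rule ccontr)
  assume "\<not> card K < s"
  then obtain K' where "K' \<subseteq> K" and "card K' = s"
    by (meson not_less obtain_subset_with_card_n)
  then have "is_clique V E K'" using assms(2) unfolding is_clique_def by blast
  then show False using assms(1) \<open>card K' = s\<close> unfolding ramsey_good_def by blast
qed

lemma indep_through_deleted_edge:
  assumes "ramsey_good s t V E" and "\<not> ramsey_good s t V (del_edge E a b)"
  obtains I where "is_indep V (del_edge E a b) I" "card I = t" "a \<in> I" "b \<in> I"
proof -
  have "\<not> is_clique V (del_edge E a b) K" if "card K = s" for K
    using assms(1) that unfolding ramsey_good_def is_clique_def del_edge_def by blast
  then obtain I where I: "is_indep V (del_edge E a b) I" "card I = t"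
    using assms(2) unfolding ramsey_good_def by blast
  moreover have "a \<in> I \<and> b \<in> I"
  proof (rule ccontr)
    assume "\<not> (a \<in> I \<and> b \<in> I)"
    then have "is_indep V E I" using I(1) unfolding is_indep_def del_edge_def by auto
    then show False using assms(1) I(2) unfolding ramsey_good_def by blast
  qed
  ultimately show ?thesis using that by blast
qed

definition compl_graph :: "'a set \<Rightarrow> ('a \<Rightarrow> 'a \<Rightarrow> bool) \<Rightarrow> 'a \<Rightarrow> 'a \<Rightarrow> bool" where
  "compl_graph V E x y \<longleftrightarrow> x \<in> V \<and> y \<in> V \<and> x \<noteq> y \<and> \<not> E x y"

lemma simple_graph_compl: "simple_graph V E \<Longrightarrow> simple_graph V (compl_graph V E)"
  unfolding simple_graph_def compl_graph_def by blast

lemma is_indep_compl_iff: "is_indep V (compl_graph V E) K \<longleftrightarrow> is_clique V E K"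
  unfolding is_indep_def is_clique_def compl_graph_def by blast

lemma is_clique_compl_iff:
  assumes "\<And>x. \<not> E x x"
  shows "is_clique V (compl_graph V E) K \<longleftrightarrow> is_indep V E K"
  using assms unfolding is_indep_def is_clique_def compl_graph_def by (metis subsetD)

lemma ramsey_good_compl_iff:
  assumes "\<And>x. \<not> E x x"
  shows "ramsey_good t s V (compl_graph V E) \<longleftrightarrow> ramsey_good s t V E"
  using assms by (auto simp: ramsey_good_def is_clique_compl_iff is_indep_compl_iff)

lemma compl_add_edge: "compl_graph V (add_edge E u v) = del_edge (compl_graph V E) u v"
  by (auto simp: fun_eq_iff compl_graph_def add_edge_def del_edge_def)

lemma compl_del_edge:
  assumes "u \<in> V" and "v \<in> V" and "u \<noteq> v"
  shows "compl_graph V (del_edge E u v) = add_edge (compl_graph V E) u v"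
  using assms by (auto simp: fun_eq_iff compl_graph_def add_edge_def del_edge_def)

lemma clique_through_added_edge:
  assumes "\<And>x. \<not> E x x" and "u \<noteq> v"
    and "ramsey_good s t V E" and "\<not> ramsey_good s t V (add_edge E u v)"
  obtains K where "is_clique V (add_edge E u v) K" "card K = s" "u \<in> K" "v \<in> K"
proof -
  have "ramsey_good t s V (compl_graph V E)"
    using assms(1,3) by (simp add: ramsey_good_compl_iff)
  moreover have "\<not> add_edge E u v x x" for x
    using assms(1,2) unfolding add_edge_def by blast
  then have "\<not> ramsey_good t s V (del_edge (compl_graph V E) u v)"
    using assms(4) by (simp add: ramsey_good_compl_iff flip: compl_add_edge)
  ultimately obtain I where "is_indep V (del_edge (compl_graph V E) u v) I"
      and "card I = s" "u \<in> I" "v \<in> I"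
    by (rule indep_through_deleted_edge)
  then show ?thesis using that by (simp add: is_indep_compl_iff flip: compl_add_edge)
qed

lemma doubly_saturated_compl:
  assumes "simple_graph V E" and "doubly_saturated s t V E"
  shows "doubly_saturated t s V (compl_graph V E)"
proof -
  have irrefl: "\<And>x. \<not> E x x" and inV: "\<And>x y. E x y \<Longrightarrow> x \<in> V \<and> y \<in> V"
    using assms(1) unfolding simple_graph_def by blast+
  have irrefl_edited: "\<not> add_edge E u v x x" "\<not> del_edge E u v x x" if "u \<noteq> v" for u v x
    using irrefl that unfolding add_edge_def del_edge_def by auto
  note ds = doubly_saturatedD[OF assms(2)]
  have "ramsey_good t s V (compl_graph V E)"
    using ds(1) irrefl by (simp add: ramsey_good_compl_iff)
  moreover have "\<not> ramsey_good t s V (add_edge (compl_graph V E) u v)"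
    if "u \<in> V" "v \<in> V" "u \<noteq> v" "\<not> compl_graph V E u v" for u v
  proof -
    have "\<not> ramsey_good s t V (del_edge E u v)"
      using that by (intro ds(3)) (simp add: compl_graph_def)
    then show ?thesis
      using that irrefl_edited(2)[OF \<open>u \<noteq> v\<close>]
      by (simp add: ramsey_good_compl_iff flip: compl_del_edge)
  qed
  moreover have "\<not> ramsey_good t s V (del_edge (compl_graph V E) u v)"
    if "compl_graph V E u v" for u v
  proof -
    have "u \<noteq> v" and "\<not> ramsey_good s t V (add_edge E u v)"
      using that ds(2)[of u v] by (auto simp: compl_graph_def)
    then show ?thesis
      using irrefl_edited(1)[OF \<open>u \<noteq> v\<close>]
      by (simp add: ramsey_good_compl_iff flip: compl_add_edge)
  qed
  moreover have "\<exists>u\<in>V. \<exists>v\<in>V. u \<noteq> v \<and> \<not> compl_graph V E u v"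
    using ds(5) inV irrefl unfolding compl_graph_def by metis
  moreover have "\<exists>u v. compl_graph V E u v"
    using ds(4) unfolding compl_graph_def by blast
  ultimately show ?thesis unfolding doubly_saturated_def by blast
qed

lemma neighbourhood_clique_card_le:
  assumes "simple_graph V E" and "ramsey_good s t V E" and "w \<in> V"
    and "X \<subseteq> {v. E w v}" and "pairwise E X"
  shows "card X \<le> s - 2"
proof -
  have "\<not> E w w" and sym: "\<And>x y. E x y \<Longrightarrow> E y x" and "{v. E w v} \<subseteq> V" and "finite V"
    using assms(1) unfolding simple_graph_def by blast+
  have "is_clique V E (insert w X)"
    unfolding is_clique_def using assms(3-5) sym \<open>{v. E w v} \<subseteq> V\<close> by (auto simp: pairwise_def)
  then have "card (insert w X) < s" by (rule clique_card_less[OF assms(2)])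
  moreover have "w \<notin> X" using assms(4) \<open>\<not> E w w\<close> by blast
  moreover have "finite X"
    using assms(4) \<open>{v. E w v} \<subseteq> V\<close> \<open>finite V\<close> by (meson finite_subset)
  ultimately show ?thesis by simp
qed

lemma neighbourhood_clique_avoiding:
  assumes sg: "simple_graph V E" and ds: "doubly_saturated s t V E"
    and "t \<ge> 3" and "E w a"
  shows "\<exists>K\<subseteq>{v. E w v}. pairwise E K \<and> card K = s - 2 \<and> a \<notin> K"
proof -
  have irrefl: "\<And>x. \<not> E x x" and "finite V" and "w \<in> V"
    using sg \<open>E w a\<close> unfolding simple_graph_def by blast+
  obtain I where I: "is_indep V (del_edge E w a) I" "card I = t" "w \<in> I" "a \<in> I"
    using indep_through_deleted_edge[OF doubly_saturatedD(1)[OF ds]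
        doubly_saturatedD(3)[OF ds \<open>E w a\<close>]] by blast
  have "\<not> I \<subseteq> {w, a}"
  proof
    assume "I \<subseteq> {w, a}"
    then have "card I \<le> card {w, a}" by (simp add: card_mono)
    also have "\<dots> \<le> 2" by (simp add: card_insert_if)
    finally show False using I(2) \<open>t \<ge> 3\<close> by simp
  qed
  then obtain y where y: "y \<in> I" "w \<noteq> y" "y \<noteq> a" by blast
  then have "y \<in> V" "\<not> E w y" "\<not> E a y"
    using I(1,3,4) unfolding is_indep_def del_edge_def by auto
  then obtain K where K: "is_clique V (add_edge E w y) K" "card K = s" "w \<in> K" "y \<in> K"
    using clique_through_added_edge[OF irrefl \<open>w \<noteq> y\<close> doubly_saturatedD(1)[OF ds]
        doubly_saturatedD(2)[OF ds \<open>w \<in> V\<close> \<open>y \<in> V\<close> \<open>w \<noteq> y\<close> \<open>\<not> E w y\<close>]]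
    by blast
  have "finite K" using K(1) \<open>finite V\<close> unfolding is_clique_def by (auto intro: finite_subset)
  show ?thesis
  proof (intro exI[of _ "K - {w, y}"] conjI)
    show "K - {w, y} \<subseteq> {v. E w v}"
      using K(1,3) unfolding is_clique_def add_edge_def by auto
    show "pairwise E (K - {w, y})"
      using K(1) unfolding is_clique_def add_edge_def pairwise_def by auto
    show "card (K - {w, y}) = s - 2"
      using K(2-4) \<open>finite K\<close> \<open>w \<noteq> y\<close> by (simp add: card_Diff_subset)
    show "a \<notin> K - {w, y}"
      using K(1,4) \<open>\<not> E a y\<close> unfolding is_clique_def add_edge_def by auto
  qed
qed

lemma neighbourhood_card_ge:
  assumes sg: "simple_graph V E" and ds: "doubly_saturated s t V E"
    and "t \<ge> 3" and "E w u"
  shows "2 * (s - 2) \<le> card {v. E w v}"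
proof (rule twice_clique_bound_le_card[where R = E])
  have "{v. E w v} \<subseteq> V" and "finite V"
    using sg unfolding simple_graph_def by blast+
  then show "finite {v. E w v}" by (rule finite_subset)
  show "{v. E w v} \<noteq> {}" using \<open>E w u\<close> by blast
  have "w \<in> V" using sg \<open>E w u\<close> unfolding simple_graph_def by blast
  moreover note doubly_saturatedD(1)[OF ds]
  ultimately show "card X \<le> s - 2" if "X \<subseteq> {v. E w v}" and "pairwise E X" for X
    using neighbourhood_clique_card_le[OF sg] that by blast
  show "\<exists>K\<subseteq>{v. E w v}. pairwise E K \<and> card K = s - 2 \<and> a \<notin> K" if "a \<in> {v. E w v}" for a
    using neighbourhood_clique_avoiding[OF sg ds \<open>t \<ge> 3\<close>] that by blast
qed

lemma card_eq_neighbours_plus_non_neighbours: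
  assumes "simple_graph V E" and "w \<in> V"
  shows "card V = 1 + card {v. E w v} + card {v. compl_graph V E w v}"
proof -
  have "finite V" and irrefl: "\<not> E w w" and inV: "\<And>v. E w v \<Longrightarrow> v \<in> V"
    using assms(1) unfolding simple_graph_def by blast+
  have V: "V = insert w ({v. E w v} \<union> {v. compl_graph V E w v})"
    using assms(2) inV unfolding compl_graph_def by auto
  have "finite {v. E w v}" and "finite {v. compl_graph V E w v}"
    using \<open>finite V\<close> inV unfolding compl_graph_def by (auto intro: finite_subset)
  moreover have "{v. E w v} \<inter> {v. compl_graph V E w v} = {}"
    unfolding compl_graph_def by blast
  moreover have "w \<notin> {v. E w v} \<union> {v. compl_graph V E w v}"
    using irrefl unfolding compl_graph_def by blast
  ultimately show ?thesis
    by (subst V) (simp add: card_Un_disjoint)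
qed

lemma vertex_with_neighbour_and_non_neighbour:
  assumes "simple_graph V E" and "E a b" and "compl_graph V E p q"
  obtains w u x where "E w u" and "compl_graph V E w x"
proof (cases "\<exists>u. E p u")
  case True
  then show ?thesis using that assms(3) by blast
next
  case False
  have "\<And>x y. E x y \<Longrightarrow> E y x" and "a \<in> V"
    using assms(1,2) unfolding simple_graph_def by blast+
  then have "compl_graph V E a p"
    using False assms(2,3) unfolding compl_graph_def by blast
  then show ?thesis using that assms(2) by blast
qed

theorem mainTheorem4:
  fixes V :: "'a set" and E :: "'a \<Rightarrow> 'a \<Rightarrow> bool" and s t :: nat
  assumes "s \<ge> 3" and "t \<ge> 3"
    and "simple_graph V E"
    and "doubly_saturated s t V E"
  shows "card V \<ge> 2 * s + 2 * t - 7"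
proof -
  obtain a b p q where "E a b" and "compl_graph V E p q"
    using doubly_saturatedD(4,5)[OF assms(4)] unfolding compl_graph_def by blast
  then obtain w u x where "E w u" and "compl_graph V E w x"
    using vertex_with_neighbour_and_non_neighbour[OF assms(3)] by metis
  have "2 * (s - 2) \<le> card {v. E w v}"
    using neighbourhood_card_ge[OF assms(3,4,2) \<open>E w u\<close>] .
  moreover have "2 * (t - 2) \<le> card {v. compl_graph V E w v}"
    using neighbourhood_card_ge[OF simple_graph_compl doubly_saturated_compl \<open>s \<ge> 3\<close>
        \<open>compl_graph V E w x\<close>] assms(3,4) by blast
  moreover have "w \<in> V" using \<open>E w u\<close> assms(3) unfolding simple_graph_def by blast
  then have "card V = 1 + card {v. E w v} + card {v. compl_graph V E w v}"
    by (rule card_eq_neighbours_plus_non_neighbours[OF assms(3)])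
  ultimately show ?thesis using assms(1,2) by linarith
qed

end
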